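(* Let $\{\omega_n\}$ be a set of nonzero, non-real complex numbers which is the disjoint union of $M$ branches $\omega_{m,j}=d_j(m+\xi_j)+O(m^{-\epsilon})$ ($m\ge1$, $1\le j\le M$, some $\epsilon>0$) with $d_j\in\mathbb{C}$, $\operatorname{Im}d_j<0$, $\xi_j\in\mathbb{C}$. Let $\beta>0$, $\mu\in\mathbb{C}\setminus\{0\}$ and $$\rho(\omega)=\frac{\mu\sinh\frac{\beta\omega}{2}}{\prod_n\left[1-\left(\frac{\omega}{\omega_n}\right)^2\right]}.$$ Suppose there is $s\in\mathbb{R}$ such that $\rho'(\omega)/\rho(\omega)=s/\omega+o(1/\omega)$ as $\omega\to+\infty$ along the real axis. Then $$-i\sum_{j=1}^M\frac{1}{d_j}=\frac{\beta}{2\pi}\qquad\text{and}\qquad\sum_{j=1}^M(1+2\xi_j)=s.$$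
   Context: In the physical application $s=2\Delta-d$, where $\Delta$ is the scaling dimension of the operator and $d$ the spacetime dimension. The product converges absolutely since $\sum_n|\omega_n|^{-2}<\infty$. *)

theory Defs
  imports "HOL-Analysis.Analysis" "HOL-Library.Landau_Symbols"
begin

text \<open>The branches are indexed by (m, j) with m \<ge> 1 and j < M (j = 0..M-1 stands
  for 1..M). The infinite product over all \<omega>_n is taken as the finite product over the
  branches of the infinite products over m \<ge> 1 (legitimate by absolute convergence).\<close>

definition branch_prod :: "(nat \<Rightarrow> nat \<Rightarrow> complex) \<Rightarrow> nat \<Rightarrow> complex \<Rightarrow> complex" where
  "branch_prod w M z = (\<Prod>j<M. \<Prod>m. (1 - (z / w (Suc m) j)^2))"

definition rho_fun :: "complex \<Rightarrow> real \<Rightarrow> (nat \<Rightarrow> nat \<Rightarrow> complex) \<Rightarrow> nat \<Rightarrow> complex \<Rightarrow> complex" where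
  "rho_fun \<mu> \<beta> w M z = \<mu> * sinh (of_real \<beta> * z / 2) / branch_prod w M z"

end

(*
  Logarithmic differentiation gives
    rho'/rho (x) = (beta/2) coth (beta x/2) + sum_j S_j(x),
    S_j(x) = sum_m (1/(w_{m,j} - x) - 1/(w_{m,j} + x)),
  and S_j is the branch_series of branch j.  For an exact branch w_m = d (m + xi) the series is
  a difference of digamma values: with z = x/d, which runs to infinity in the upper half plane,
    S(x) = (psi(z+1+xi) - psi(z-xi) - pi cot(pi (z-xi))) / d
  by the reflection formula.  Here pi cot(pi (z-xi)) = -i pi + O(exp(-c x)) and
  z (psi(z+1+xi) - psi(z-xi)) -> 1 + 2 xi, so x S(x) = i pi x/d + 1 + 2 xi + o(1).  An error
  w_m - d (m + xi) -> 0 changes the terms of S by e_m/(m + x)^2 with e_m -> 0, hence x S only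
  by o(1).  Therefore
    x rho'/rho (x) = x (beta/2 + i pi sum_j 1/d_j) + sum_j (1 + 2 xi_j) + o(1),
  and comparison with x rho'/rho (x) = s + o(1) forces the coefficient of x to vanish and the
  constant terms to agree.
*)
theory Submission
  imports Defs "HOL-Complex_Analysis.Complex_Analysis" "HOL-Real_Asymp.Real_Asymp"
begin

lemma norm_add_of_real_ge_cone:
  fixes u :: complex and k R \<alpha> B :: real
  assumes k: "k \<ge> 0" and R: "R > 0" and \<alpha>: "\<alpha> > 0"
    and im: "\<alpha> * R \<le> \<bar>Im u\<bar>" and bound: "norm u \<le> B * R"
  shows "\<alpha> / (2 * B + 1) * (k + R) \<le> norm (u + of_real k)"
proof -
  have Im_le: "\<bar>Im u\<bar> \<le> norm u" by (rule abs_Im_le_cmod)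
  have "\<alpha> * R \<le> B * R" using im bound Im_le by linarith
  hence \<alpha>B: "\<alpha> \<le> B" using R by simp
  hence B: "2 * B + 1 > 0" using \<alpha> by linarith
  have "\<alpha> * (k + R) \<le> (2 * B + 1) * norm (u + of_real k)"
  proof (cases "2 * norm u \<le> k")
    case True
    have "norm (of_real k :: complex) - norm u \<le> norm (u + of_real k)"
      by (metis add.commute norm_diff_ineq)
    hence "k \<le> 2 * norm (u + of_real k)" using True k by simp
    moreover have "\<alpha> * k \<le> B * k" using \<alpha>B k by (rule mult_right_mono)
    moreover have "\<alpha> * R \<le> k / 2" using True im Im_le by linarith
    moreover have "B * k \<le> B * (2 * norm (u + of_real k))"
      using calculation(1) \<alpha>B \<alpha> by (intro mult_left_mono) auto
    ultimately show ?thesis by (simp add: algebra_simps)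
  next
    case False
    have "k + R \<le> (2 * B + 1) * R" using False bound by (simp add: algebra_simps)
    hence "\<alpha> * (k + R) \<le> (2 * B + 1) * (\<alpha> * R)"
      using \<alpha> by (simp add: mult_left_mono mult.left_commute)
    moreover have "\<alpha> * R \<le> norm (u + of_real k)"
      using im abs_Im_le_cmod[of "u + of_real k"] by simp
    hence "(2 * B + 1) * (\<alpha> * R) \<le> (2 * B + 1) * norm (u + of_real k)"
      using B by (intro mult_left_mono) auto
    ultimately show ?thesis by linarith
  qed
  thus ?thesis using B by (simp add: field_simps)
qed

lemma ray_lower_bound:
  fixes q :: complex and C :: real
  assumes q: "Im q \<noteq> 0"
  obtains c0 X0 where "c0 > 0" "X0 \<ge> 1"
    "\<And>x c k. X0 \<le> x \<Longrightarrow> norm c \<le> C \<Longrightarrow> c0 * (real k + x) \<le> norm (of_real x * q + c + of_nat k)"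
proof
  define \<alpha> where "\<alpha> = \<bar>Im q\<bar> / 2"
  have \<alpha>: "\<alpha> > 0" using q by (simp add: \<alpha>_def)
  show "\<alpha> / (2 * (2 * norm q) + 1) > 0"
    using \<alpha> norm_ge_zero[of q] by (intro divide_pos_pos) linarith+
  show "max 1 (C / \<alpha>) \<ge> 1" by simp
  fix x k and c :: complex
  assume x: "max 1 (C / \<alpha>) \<le> x" and c: "norm c \<le> C"
  have x1: "x \<ge> 1" using x by simp
  have C: "C \<le> \<alpha> * x" using x \<alpha> by (simp add: field_simps)
  have "\<bar>Im c\<bar> \<le> C" using abs_Im_le_cmod c by (rule order_trans)
  moreover have "\<bar>x * Im q\<bar> = 2 * (\<alpha> * x)" using x1 by (simp add: \<alpha>_def abs_mult)
  moreover have "\<bar>x * Im q\<bar> - \<bar>Im c\<bar> \<le> \<bar>x * Im q + Im c\<bar>"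
    by (metis abs_minus_cancel abs_triangle_ineq2 diff_minus_eq_add)
  ultimately have im: "\<alpha> * x \<le> \<bar>Im (of_real x * q + c)\<bar>" using C by simp
  have "\<alpha> \<le> norm q" using abs_Im_le_cmod[of q] by (simp add: \<alpha>_def)
  hence "\<alpha> * x \<le> norm q * x" using x1 by (intro mult_right_mono) auto
  moreover have "norm (of_real x * q + c) \<le> x * norm q + norm c"
    using norm_triangle_ineq[of "of_real x * q" c] x1 by (simp add: norm_mult)
  ultimately have "norm (of_real x * q + c) \<le> 2 * norm q * x" using c C by (simp add: algebra_simps)
  thus "\<alpha> / (2 * (2 * norm q) + 1) * (real k + x) \<le> norm (of_real x * q + c + of_nat k)"
    using norm_add_of_real_ge_cone[OF _ _ \<alpha> im, of "real k" "2 * norm q"] x1 by simp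
qed

lemma inverse_square_shift_summable:
  fixes R :: real
  assumes R: "R \<ge> 1"
  shows "summable (\<lambda>k. 1 / (real k + R)^2)" "(\<Sum>k. 1 / (real k + R)^2) \<le> 2 / R"
proof -
  define f where "f = (\<lambda>n. 1 / (real n + R - 1/2))"
  have "f \<longlonglongrightarrow> 0" unfolding f_def by real_asymp
  hence telescope: "(\<lambda>n. f n - f (Suc n)) sums f 0"
    using telescope_sums' by fastforce
  have le: "1 / (real k + R)^2 \<le> f k - f (Suc k)" for k
  proof -
    have "1 \<le> (real k + R)^2" using R by (simp add: one_le_power)
    moreover have "f k - f (Suc k) = 1 / ((real k + R)^2 - 1/4)"
      unfolding f_def using R by (simp add: field_simps power2_eq_square)
    ultimately show ?thesis by (simp add: frac_le)
  qed
  show summable: "summable (\<lambda>k. 1 / (real k + R)^2)"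
    by (rule summable_comparison_test[OF _ sums_summable[OF telescope]]) (use le in auto)
  have "(\<Sum>k. 1 / (real k + R)^2) \<le> (\<Sum>k. f k - f (Suc k))"
    by (rule suminf_le[OF le summable sums_summable[OF telescope]])
  also have "\<dots> = f 0" using telescope by (simp add: sums_iff)
  also have "\<dots> \<le> 2 / R" using R unfolding f_def by (simp add: field_simps)
  finally show "(\<Sum>k. 1 / (real k + R)^2) \<le> 2 / R" .
qed

lemma summable_norm_le_inverse_square:
  fixes D :: "nat \<Rightarrow> 'a :: banach" and R C :: real
  assumes R: "R \<ge> 1" and D: "\<And>k. norm (D k) \<le> C / (real k + R)^2"
  shows "summable D" "norm (\<Sum>k. D k) \<le> 2 * C / R"
proof -
  have majorant: "summable (\<lambda>k. C * (1 / (real k + R)^2))"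
    using inverse_square_shift_summable(1)[OF R] by (rule summable_mult)
  have norm_summable: "summable (\<lambda>k. norm (D k))"
    by (rule summable_comparison_test[OF _ majorant]) (use D in auto)
  thus "summable D" by (rule summable_norm_cancel)
  have "0 \<le> C / (real 0 + R)^2" using D[of 0] by (rule order_trans[OF norm_ge_zero])
  moreover have "(real 0 + R)^2 > 0" using R by simp
  ultimately have "C \<ge> 0" by (simp add: zero_le_divide_iff)
  have "norm (\<Sum>k. D k) \<le> (\<Sum>k. norm (D k))" by (rule summable_norm[OF norm_summable])
  also have "\<dots> \<le> (\<Sum>k. C * (1 / (real k + R)^2))"
    by (rule suminf_le[OF _ norm_summable majorant]) (use D in auto)
  also have "\<dots> = C * (\<Sum>k. 1 / (real k + R)^2)"
    by (rule suminf_mult[OF inverse_square_shift_summable(1)[OF R]])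
  also have "\<dots> \<le> C * (2 / R)"
    using inverse_square_shift_summable(2)[OF R] \<open>C \<ge> 0\<close> by (rule mult_left_mono)
  finally show "norm (\<Sum>k. D k) \<le> 2 * C / R" by (simp add: mult.commute)
qed

lemma norm_suminf_le_head_tail:
  fixes D :: "nat \<Rightarrow> 'a :: banach" and e :: "nat \<Rightarrow> real" and x B \<eta> :: real
  assumes x: "x \<ge> 1" and D: "\<And>k. norm (D k) \<le> e k / (real k + x)^2"
    and B: "\<And>k. e k \<le> B" and \<eta>: "\<And>k. N \<le> k \<Longrightarrow> e k \<le> \<eta>"
  shows "x * norm (\<Sum>k. D k) \<le> 2 * \<eta> + real N * B / x"
proof -
  have e_nonneg: "e k \<ge> 0" for k
  proof -
    have "0 \<le> e k / (real k + x)^2" using D[of k] by (rule order_trans[OF norm_ge_zero])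
    moreover have "(real k + x)^2 > 0" using x by simp
    ultimately show ?thesis by (simp add: zero_le_divide_iff)
  qed
  have "summable D"
    by (rule summable_norm_le_inverse_square(1)[OF x])
       (rule order_trans[OF D divide_right_mono[OF B zero_le_power2]])
  hence split: "(\<Sum>k. D k) = (\<Sum>k. D (k + N)) + (\<Sum>k<N. D k)"
    by (rule suminf_split_initial_segment)
  have "norm (\<Sum>k. D (k + N)) \<le> 2 * \<eta> / x"
  proof (rule summable_norm_le_inverse_square(2)[OF x])
    fix k
    have "e (k + N) / (real (k + N) + x)^2 \<le> \<eta> / (real k + x)^2"
      using \<eta>[of "k + N"] e_nonneg[of "k + N"] x by (intro frac_le power_mono) auto
    thus "norm (D (k + N)) \<le> \<eta> / (real k + x)^2" using D[of "k + N"] by linarith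
  qed
  moreover have "norm (\<Sum>k<N. D k) \<le> real N * (B / x^2)"
  proof -
    have "norm (D k) \<le> B / x^2" for k
    proof -
      have "e k / (real k + x)^2 \<le> B / x^2"
        using B[of k] e_nonneg[of k] x by (intro frac_le power_mono) auto
      thus ?thesis using D[of k] by linarith
    qed
    hence "norm (\<Sum>k<N. D k) \<le> (\<Sum>k<N. B / x^2)" by (intro sum_norm_le) auto
    thus ?thesis by simp
  qed
  ultimately have "x * norm (\<Sum>k. D k) \<le> x * (2 * \<eta> / x + real N * (B / x^2))"
    using x split norm_triangle_ineq[of "\<Sum>k. D (k + N)" "\<Sum>k<N. D k"]
    by (intro mult_left_mono) auto
  also have "\<dots> = 2 * \<eta> + real N * B / x" using x by (simp add: field_simps power2_eq_square)
  finally show ?thesis .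
qed

lemma tendsto_of_real_mult_suminf_zero:
  fixes D :: "real \<Rightarrow> nat \<Rightarrow> complex" and e :: "nat \<Rightarrow> real" and X0 :: real
  assumes e: "e \<longlonglongrightarrow> 0" and D: "\<And>x k. X0 \<le> x \<Longrightarrow> norm (D x k) \<le> e k / (real k + x)^2"
  shows "((\<lambda>x. of_real x * (\<Sum>k. D x k)) \<longlongrightarrow> 0) at_top"
proof (rule tendstoI)
  fix \<epsilon> :: real assume \<epsilon>: "\<epsilon> > 0"
  obtain B where B: "B > 0" "\<And>k. norm (e k) \<le> B"
    using convergent_imp_Bseq[OF convergentI[OF e]] by (auto simp: Bseq_def)
  obtain N where N: "\<And>k. N \<le> k \<Longrightarrow> e k < \<epsilon> / 4"
    using order_tendstoD(2)[OF e, of "\<epsilon> / 4"] \<epsilon> by (auto simp: eventually_sequentially)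
  show "eventually (\<lambda>x. dist (of_real x * (\<Sum>k. D x k)) 0 < \<epsilon>) at_top"
    using eventually_ge_at_top[of "max (max X0 1) (4 * real N * B / \<epsilon> + 1)"]
  proof eventually_elim
    case (elim x)
    hence x: "X0 \<le> x" "1 \<le> x" "4 * real N * B / \<epsilon> < x" by auto
    have "x * norm (suminf (D x)) \<le> 2 * (\<epsilon> / 4) + real N * B / x"
      by (rule norm_suminf_le_head_tail[OF x(2) D[OF x(1)] _ less_imp_le[OF N]])
         (use B(2) in \<open>auto intro: order_trans[OF abs_ge_self]\<close>)
    moreover have "real N * B / x < \<epsilon> / 4" using x(2,3) \<epsilon> by (simp add: field_simps)
    ultimately have "x * norm (suminf (D x)) < \<epsilon>" using \<epsilon> by linarith
    thus ?case using x(2) by (simp add: norm_mult)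
  qed
qed

lemma norm_divide_mult4_le:
  fixes N A B C D :: complex and m :: real
  assumes m: "m > 0" and "m \<le> norm A" "m \<le> norm B" "m \<le> norm C" "m \<le> norm D"
  shows "norm (N / (A * B * C * D)) \<le> norm N / m ^ 4"
proof -
  have "m * m * m * m \<le> norm A * norm B * norm C * norm D"
    using assms by (intro mult_mono) auto
  hence le: "m ^ 4 \<le> norm (A * B * C * D)" by (simp add: norm_mult power4_eq_xxxx)
  moreover have "0 < m ^ 4" using m by simp
  ultimately have "0 < norm (A * B * C * D) * m ^ 4" by (meson mult_pos_pos order_less_le_trans)
  with le show ?thesis unfolding norm_divide by (intro divide_left_mono) auto
qed

lemma norm_inverse_diff_le:
  fixes a b :: "'a :: real_normed_field" and m :: real
  assumes m: "m > 0" and a: "m \<le> norm a" and b: "m \<le> norm b"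
  shows "norm (1 / a - 1 / b) \<le> norm (b - a) / m^2"
proof -
  have "a \<noteq> 0" "b \<noteq> 0" using m a b by auto
  hence "1 / a - 1 / b = (b - a) / (a * b)" by (simp add: diff_frac_eq)
  hence "norm (1 / a - 1 / b) = norm (b - a) / (norm a * norm b)"
    by (simp add: norm_divide norm_mult)
  also have "\<dots> \<le> norm (b - a) / (m * m)"
    using m a b by (intro divide_left_mono mult_mono mult_pos_pos) auto
  finally show ?thesis by (simp add: power2_eq_square)
qed

lemma linear_asymp_unique:
  fixes f :: "real \<Rightarrow> complex" and K s T :: complex
  assumes lim: "((\<lambda>x. of_real x * f x) \<longlongrightarrow> s) at_top"
    and linear: "((\<lambda>x. of_real x * (f x - K)) \<longlongrightarrow> T) at_top"
  shows "K = 0" "T = s"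
proof -
  have "((\<lambda>x::real. 1 / x) \<longlongrightarrow> 0) at_top" by real_asymp
  from tendsto_of_real[OF this, where 'a = complex]
  have "((\<lambda>x. (of_real x * f x - of_real x * (f x - K)) * (1 / of_real x)) \<longlongrightarrow> (s - T) * 0) at_top"
    by (intro tendsto_intros lim linear) simp
  moreover have "eventually (\<lambda>x. (of_real x * f x - of_real x * (f x - K)) * (1 / of_real x) = K) at_top"
    using eventually_gt_at_top[of 0] by eventually_elim (simp add: field_simps)
  ultimately have "((\<lambda>x::real. K) \<longlongrightarrow> 0) at_top" by (simp add: tendsto_cong)
  thus "K = 0" by (simp add: tendsto_const_iff)
  with linear have "((\<lambda>x. of_real x * f x) \<longlongrightarrow> T) at_top" by simp
  from tendsto_unique[OF trivial_limit_at_top_linorder this lim] show "T = s" .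
qed

lemma bigo_powr_neg_tendsto_zero:
  fixes f :: "nat \<Rightarrow> real" and \<epsilon> :: real
  assumes \<epsilon>: "\<epsilon> > 0" and f: "f \<in> O(\<lambda>m. real m powr - \<epsilon>)"
  shows "f \<longlonglongrightarrow> 0"
proof -
  have "(\<lambda>m. real m powr - \<epsilon>) \<in> o(\<lambda>_. 1)" using \<epsilon> by real_asymp
  with f have "f \<in> o(\<lambda>_. 1)" by (rule landau_o.big_small_trans)
  thus ?thesis using smalloD_tendsto by fastforce
qed

lemma smallo_inverse_imp_tendsto:
  fixes f :: "real \<Rightarrow> complex" and c :: complex
  assumes "(\<lambda>x. f x - c / of_real x) \<in> o[at_top](\<lambda>x. 1 / complex_of_real x)"
  shows "((\<lambda>x. of_real x * f x) \<longlongrightarrow> c) at_top"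
proof -
  have "((\<lambda>x. (f x - c / of_real x) / (1 / of_real x) + c) \<longlongrightarrow> 0 + c) at_top"
    using smalloD_tendsto[OF assms] by (intro tendsto_add tendsto_const)
  moreover have "eventually (\<lambda>x. (f x - c / of_real x) / (1 / of_real x) + c = of_real x * f x) at_top"
    using eventually_gt_at_top[of 0] by eventually_elim (simp add: field_simps)
  ultimately show ?thesis by (simp add: tendsto_cong)
qed

section \<open>Digamma and cotangent asymptotics\<close>

lemma Digamma_reflection_complex:
  fixes u :: complex
  assumes u: "u \<notin> \<int>"
  shows "Digamma (1 - u) - Digamma u = of_real pi * cot (of_real pi * u)"
proof -
  have "1 - u \<notin> \<int>"
    using u Ints_diff[OF Ints_1, of "1 - u"] by auto
  hence poles: "u \<notin> \<int>\<^sub>\<le>\<^sub>0" "1 - u \<notin> \<int>\<^sub>\<le>\<^sub>0"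
    using u nonpos_Ints_subset_Ints by auto
  define S C where "S = sin (of_real pi * u)" and "C = cos (of_real pi * u)"
  have sin: "sin (of_real pi * u) \<noteq> 0"
  proof
    assume "sin (of_real pi * u) = 0"
    then obtain n :: int where "of_real pi * u = of_real (n * pi)" by (auto simp: sin_eq_0)
    hence "u = of_int n" by (simp add: field_simps)
    thus False using u by auto
  qed
  have "((\<lambda>z. Gamma z * Gamma (1 - z)) has_field_derivative
          Gamma u * Gamma (1 - u) * (Digamma u - Digamma (1 - u))) (at u)"
    using poles by (auto intro!: derivative_eq_intros simp: algebra_simps)
  moreover have "((\<lambda>z. Gamma z * Gamma (1 - z)) has_field_derivative
          - (of_real pi * (of_real pi * cos (of_real pi * u))) / sin (of_real pi * u)^2) (at u)"
    unfolding Gamma_reflection_complex using sin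
    by (auto intro!: derivative_eq_intros simp: power2_eq_square)
  ultimately have "Gamma u * Gamma (1 - u) * (Digamma u - Digamma (1 - u))
      = - (of_real pi * (of_real pi * cos (of_real pi * u))) / sin (of_real pi * u)^2"
    by (rule DERIV_unique)
  hence eq: "of_real pi / S * (Digamma u - Digamma (1 - u)) = - (of_real pi * (of_real pi * C)) / S^2"
    unfolding Gamma_reflection_complex S_def C_def .
  have "Digamma u - Digamma (1 - u) = S / of_real pi * (of_real pi / S * (Digamma u - Digamma (1 - u)))"
    using sin[folded S_def] by simp
  also have "\<dots> = - (of_real pi * (C / S))"
    unfolding eq using sin[folded S_def] by (simp add: field_simps power2_eq_square)
  finally have "Digamma u - Digamma (1 - u) = - (of_real pi * (C / S))" .
  thus ?thesis unfolding cot_def S_def C_def by (simp add: algebra_simps)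
qed

lemma sums_Digamma_diff:
  fixes a b :: complex
  assumes "a \<noteq> 0" "b \<noteq> 0"
  shows "(\<lambda>k. 1 / (a + of_nat k) - 1 / (b + of_nat k)) sums (Digamma b - Digamma a)"
proof -
  have "(\<lambda>k. inverse (of_nat (Suc k)) - inverse (c + of_nat k)) sums (Digamma c + euler_mascheroni)"
    if "c \<noteq> 0" for c :: complex
    using summable_Digamma[OF that] by (simp add: Digamma_def summable_sums)
  from sums_diff[OF this[OF assms(2)] this[OF assms(1)]] show ?thesis
    by (simp add: divide_inverse)
qed

lemma Digamma_shift_remainder_identity:
  fixes z \<xi> n :: complex
  assumes "z - \<xi> + n \<noteq> 0" "z + 1 + \<xi> + n \<noteq> 0" "z + n \<noteq> 0" "z + n + 1 \<noteq> 0"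
  shows "1 / (z - \<xi> + n) - 1 / (z + 1 + \<xi> + n) - (1 + 2 * \<xi>) * (1 / (z + n) - 1 / (z + n + 1))
       = (1 + 2 * \<xi>) * (\<xi> * (1 + \<xi>)) / ((z - \<xi> + n) * (z + 1 + \<xi> + n) * (z + n) * (z + n + 1))"
  using assms by (simp add: divide_simps) (simp add: algebra_simps)

text \<open>The telescoping series \<open>(1 + 2\<xi>) (1/(z+k) - 1/(z+k+1))\<close> removes the terms of order
  \<open>(k + |z|)\<^sup>-\<^sup>2\<close> from the digamma series, leaving terms of order \<open>(k + |z|)\<^sup>-\<^sup>4\<close>.\<close>

lemma sums_Digamma_shift_remainder:
  fixes z \<xi> :: complex
  assumes nz: "\<And>k. z - \<xi> + of_nat k \<noteq> 0" "\<And>k. z + 1 + \<xi> + of_nat k \<noteq> 0" "\<And>k. z + of_nat k \<noteq> 0"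
  shows "(\<lambda>k. (1 + 2 * \<xi>) * (\<xi> * (1 + \<xi>)) /
            ((z - \<xi> + of_nat k) * (z + 1 + \<xi> + of_nat k) * (z + of_nat k) * (z + of_nat k + 1)))
         sums (Digamma (z + 1 + \<xi>) - Digamma (z - \<xi>) - (1 + 2 * \<xi>) / z)"
proof -
  have "(\<lambda>n. inverse (z + of_nat n)) \<longlonglongrightarrow> 0"
    by (intro filterlim_compose[OF tendsto_inverse_0]
          tendsto_add_filterlim_at_infinity[OF tendsto_const] tendsto_of_nat)
  from telescope_sums'[OF this]
  have "(\<lambda>k. 1 / (z + of_nat k) - 1 / (z + of_nat k + 1)) sums (1 / z)"
    by (simp add: divide_inverse add_ac)
  from sums_diff[OF sums_Digamma_diff[of "z - \<xi>" "z + 1 + \<xi>"] sums_mult[OF this, of "1 + 2 * \<xi>"]]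
  have "(\<lambda>k. 1 / (z - \<xi> + of_nat k) - 1 / (z + 1 + \<xi> + of_nat k)
            - (1 + 2 * \<xi>) * (1 / (z + of_nat k) - 1 / (z + of_nat k + 1)))
        sums (Digamma (z + 1 + \<xi>) - Digamma (z - \<xi>) - (1 + 2 * \<xi>) * (1 / z))"
    using nz(1,2)[of 0] by simp
  moreover have "z + of_nat k + 1 \<noteq> 0" for k
    using nz(3)[of "Suc k"] by (simp add: add_ac)
  hence "1 / (z - \<xi> + of_nat k) - 1 / (z + 1 + \<xi> + of_nat k)
           - (1 + 2 * \<xi>) * (1 / (z + of_nat k) - 1 / (z + of_nat k + 1))
       = (1 + 2 * \<xi>) * (\<xi> * (1 + \<xi>)) /
           ((z - \<xi> + of_nat k) * (z + 1 + \<xi> + of_nat k) * (z + of_nat k) * (z + of_nat k + 1))" for k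
    using nz by (intro Digamma_shift_remainder_identity)
  ultimately show ?thesis by (simp only: times_divide_eq_right mult_1_right)
qed

lemma Digamma_shift_asymp:
  fixes q \<xi> :: complex
  assumes q: "Im q \<noteq> 0"
  shows "((\<lambda>x::real. (of_real x * q) * (Digamma (of_real x * q + 1 + \<xi>) - Digamma (of_real x * q - \<xi>)))
           \<longlongrightarrow> 1 + 2 * \<xi>) at_top"
proof -
  obtain c0 X0 where c0: "c0 > 0" "X0 \<ge> 1" and ray:
    "\<And>x c k. X0 \<le> x \<Longrightarrow> norm c \<le> 1 + norm \<xi> \<Longrightarrow>
       c0 * (real k + x) \<le> norm (of_real x * q + c + of_nat k)"
    using ray_lower_bound[OF q] by blast
  define N where "N = (1 + 2 * \<xi>) * (\<xi> * (1 + \<xi>))"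
  define z where "z x = of_real x * q" for x :: real
  define R where "R x k = N / ((z x - \<xi> + of_nat k) * (z x + 1 + \<xi> + of_nat k) *
                              (z x + of_nat k) * (z x + of_nat k + 1))" for x k
  have factors: "c0 * (real k + x) \<le> norm (z x - \<xi> + of_nat k)"
    "c0 * (real k + x) \<le> norm (z x + 1 + \<xi> + of_nat k)"
    "c0 * (real k + x) \<le> norm (z x + of_nat k)"
    "c0 * (real k + x) \<le> norm (z x + of_nat k + 1)" if "X0 \<le> x" for x k
    using ray[OF that, of "- \<xi>" k] ray[OF that, of "1 + \<xi>" k] ray[OF that, of 0 k] ray[OF that, of 1 k]
      norm_triangle_ineq[of 1 \<xi>] unfolding z_def by (simp_all add: add_ac)
  have R_bound: "norm (R x k) \<le> norm N / c0 ^ 4 / (real k + 1)^2 / (real k + x)^2"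
    if x: "X0 \<le> x" for x k
  proof -
    have pos: "c0 * (real k + x) > 0" using c0 x by simp
    have "norm (R x k) \<le> norm N / (c0 * (real k + x)) ^ 4"
      unfolding R_def by (rule norm_divide_mult4_le[OF pos factors[OF x]])
    also have "\<dots> \<le> norm N / (c0 ^ 4 * (real k + 1)^2 * (real k + x)^2)"
    proof (rule divide_left_mono)
      have "(real k + 1)^2 \<le> (real k + x)^2" using x c0 by (intro power_mono) auto
      hence "c0 ^ 4 * (real k + 1)^2 * (real k + x)^2 \<le> c0 ^ 4 * (real k + x)^2 * (real k + x)^2"
        using c0 by (intro mult_right_mono mult_left_mono) auto
      thus "c0 ^ 4 * (real k + 1)^2 * (real k + x)^2 \<le> (c0 * (real k + x)) ^ 4"
        by (simp add: power_mult_distrib power4_eq_xxxx power2_eq_square mult_ac)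
      show "0 < (c0 * (real k + x)) ^ 4 * (c0 ^ 4 * (real k + 1)^2 * (real k + x)^2)"
        using pos c0 x by simp
    qed simp
    finally show ?thesis by (simp add: field_simps)
  qed
  have "((\<lambda>x. of_real x * (\<Sum>k. R x k)) \<longlongrightarrow> 0) at_top"
    by (rule tendsto_of_real_mult_suminf_zero[OF _ R_bound]) real_asymp
  hence "((\<lambda>x. q * (of_real x * (\<Sum>k. R x k)) + (1 + 2 * \<xi>)) \<longlongrightarrow> q * 0 + (1 + 2 * \<xi>)) at_top"
    by (intro tendsto_intros)
  moreover have "eventually (\<lambda>x. q * (of_real x * (\<Sum>k. R x k)) + (1 + 2 * \<xi>) =
      z x * (Digamma (z x + 1 + \<xi>) - Digamma (z x - \<xi>))) at_top"
    using eventually_ge_at_top[of X0]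
  proof eventually_elim
    case (elim x)
    have nz: "z x - \<xi> + of_nat k \<noteq> 0" "z x + 1 + \<xi> + of_nat k \<noteq> 0" "z x + of_nat k \<noteq> 0" for k
    proof -
      have "0 < c0 * (real k + x)" using c0 elim by simp
      thus "z x - \<xi> + of_nat k \<noteq> 0" "z x + 1 + \<xi> + of_nat k \<noteq> 0" "z x + of_nat k \<noteq> 0"
        using factors[OF elim, of k] by auto
    qed
    have "(\<Sum>k. R x k) = Digamma (z x + 1 + \<xi>) - Digamma (z x - \<xi>) - (1 + 2 * \<xi>) / z x"
      unfolding R_def N_def by (rule sums_unique[symmetric, OF sums_Digamma_shift_remainder[OF nz]])
    thus ?case using nz(3)[of 0] by (simp add: z_def field_simps)
  qed
  ultimately show ?thesis unfolding z_def by (simp add: tendsto_cong)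
qed

lemma cot_plus_i_eq:
  fixes w :: complex
  assumes "exp (2 * \<i> * w) \<noteq> 1"
  shows "cot w + \<i> = 2 * \<i> * exp (2 * \<i> * w) / (exp (2 * \<i> * w) - 1)"
proof -
  define p where "p = exp (\<i> * w)"
  have p: "p \<noteq> 0" "exp (2 * \<i> * w) = p * p" "exp (- (\<i> * w)) = 1 / p"
    unfolding p_def mult_exp_exp by (simp_all add: exp_minus divide_inverse) (simp add: algebra_simps)
  have "p * p - 1 \<noteq> 0" using assms p(2) by simp
  moreover have sin_cos: "sin w = (p * p - 1) / (2 * \<i> * p)" "cos w = (p * p + 1) / (2 * p)"
    using p(1) by (simp_all add: sin_exp_eq cos_exp_eq p_def[symmetric] p(3) field_simps)
  ultimately show ?thesis
    using p unfolding cot_def sin_cos by (simp add: field_simps)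
qed

lemma tendsto_of_real_mult_cot_plus_i:
  fixes q \<xi> :: complex
  assumes q: "Im q > 0"
  shows "((\<lambda>x::real. of_real x * (cot (of_real pi * (of_real x * q - \<xi>)) + \<i>)) \<longlongrightarrow> 0) at_top"
proof -
  define E where "E x = exp (2 * \<i> * (of_real pi * (of_real x * q - \<xi>)))" for x :: real
  have norm_E: "norm (E x) = exp (- 2 * pi * (x * Im q - Im \<xi>))" for x
    by (simp add: E_def norm_exp_eq_Re)
  have "((\<lambda>x. norm (E x)) \<longlongrightarrow> 0) at_top"
    unfolding norm_E using q by real_asymp
  hence E: "(E \<longlongrightarrow> 0) at_top" by (simp only: tendsto_norm_zero_iff)
  have "((\<lambda>x. norm (of_real x * E x)) \<longlongrightarrow> 0) at_top"
    unfolding norm_mult norm_E norm_of_real using q by real_asymp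
  hence "((\<lambda>x. of_real x * E x) \<longlongrightarrow> 0) at_top" by (simp only: tendsto_norm_zero_iff)
  hence "((\<lambda>x. 2 * \<i> * (of_real x * E x) / (E x - 1)) \<longlongrightarrow> 2 * \<i> * 0 / (0 - 1)) at_top"
    by (intro tendsto_intros E) auto
  moreover have "eventually (\<lambda>x. 2 * \<i> * (of_real x * E x) / (E x - 1) =
      of_real x * (cot (of_real pi * (of_real x * q - \<xi>)) + \<i>)) at_top"
    using tendsto_imp_eventually_ne[OF E zero_neq_one]
  proof eventually_elim
    case (elim x)
    thus ?case using cot_plus_i_eq[of "of_real pi * (of_real x * q - \<xi>)"] by (simp add: E_def)
  qed
  ultimately show ?thesis by (simp add: tendsto_cong)
qed

section \<open>Asymptotics of a single branch\<close>

definition branch_series :: "(nat \<Rightarrow> complex) \<Rightarrow> complex \<Rightarrow> complex" where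
  "branch_series a z = (\<Sum>k. 1 / (a k - z) - 1 / (a k + z))"

lemma model_branch_series:
  fixes d \<xi> :: complex and x :: real
  defines "z \<equiv> of_real x / d"
  assumes d: "d \<noteq> 0" and x: "\<bar>Im \<xi>\<bar> < Im z"
  shows "branch_series (\<lambda>k. d * (of_nat (Suc k) + \<xi>)) (of_real x)
       = (Digamma (z + 1 + \<xi>) - Digamma (z - \<xi>) - of_real pi * cot (of_real pi * (z - \<xi>))) / d"
proof -
  define a b where "a = 1 + \<xi> - z" and "b = 1 + \<xi> + z"
  have a: "a + of_nat k \<noteq> 0" and b: "b + of_nat k \<noteq> 0" for k
    using x by (auto simp: a_def b_def dest: arg_cong[where f = Im])
  have x_eq: "of_real x = d * z" using d by (simp add: z_def)
  have "d * (of_nat (Suc k) + \<xi>) - of_real x = d * (a + of_nat k)"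
    "d * (of_nat (Suc k) + \<xi>) + of_real x = d * (b + of_nat k)" for k
    unfolding x_eq a_def b_def by (simp_all add: algebra_simps)
  hence "(\<lambda>k. 1 / (d * (of_nat (Suc k) + \<xi>) - of_real x) - 1 / (d * (of_nat (Suc k) + \<xi>) + of_real x))
      = (\<lambda>k. (1 / (a + of_nat k) - 1 / (b + of_nat k)) / d)"
    by (simp add: diff_divide_distrib mult.commute)
  moreover have "(\<lambda>k. (1 / (a + of_nat k) - 1 / (b + of_nat k)) / d) sums ((Digamma b - Digamma a) / d)"
    using sums_Digamma_diff[OF a[of 0] b[of 0]] by (intro sums_divide) simp
  moreover have "z - \<xi> \<notin> \<int>"
    using x by (auto elim!: Ints_cases dest: arg_cong[where f = Im])
  hence "Digamma a = Digamma (z - \<xi>) + of_real pi * cot (of_real pi * (z - \<xi>))"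
    using Digamma_reflection_complex[of "z - \<xi>"] by (simp add: a_def algebra_simps)
  ultimately show ?thesis
    unfolding branch_series_def by (simp add: sums_iff b_def add_ac diff_divide_distrib add_divide_distrib)
qed

lemma model_branch_asymp:
  fixes d \<xi> :: complex
  assumes d: "Im d < 0"
  shows "((\<lambda>x::real. of_real x * (branch_series (\<lambda>k. d * (of_nat (Suc k) + \<xi>)) (of_real x)
            - \<i> * of_real pi / d)) \<longlongrightarrow> 1 + 2 * \<xi>) at_top"
proof -
  define q where "q = 1 / d"
  have d0: "d \<noteq> 0" using d by auto
  have "(Re d)^2 + (Im d)^2 > 0" using d by (simp add: sum_power2_gt_zero_iff)
  hence q: "Im q > 0" unfolding q_def using d by (simp add: Im_divide divide_neg_pos)
  have "((\<lambda>x. (of_real x * q) * (Digamma (of_real x * q + 1 + \<xi>) - Digamma (of_real x * q - \<xi>))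
         - of_real pi * q * (of_real x * (cot (of_real pi * (of_real x * q - \<xi>)) + \<i>)))
        \<longlongrightarrow> (1 + 2 * \<xi>) - of_real pi * q * 0) at_top"
    using q by (intro tendsto_intros Digamma_shift_asymp tendsto_of_real_mult_cot_plus_i) auto
  moreover have "eventually (\<lambda>x.
      (of_real x * q) * (Digamma (of_real x * q + 1 + \<xi>) - Digamma (of_real x * q - \<xi>))
         - of_real pi * q * (of_real x * (cot (of_real pi * (of_real x * q - \<xi>)) + \<i>))
      = of_real x * (branch_series (\<lambda>k. d * (of_nat (Suc k) + \<xi>)) (of_real x) - \<i> * of_real pi / d)) at_top"
    using eventually_gt_at_top[of "\<bar>Im \<xi>\<bar> / Im q"]
  proof eventually_elim
    case (elim x)
    have z: "of_real x / d = of_real x * q" by (simp add: q_def)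
    have im: "\<bar>Im \<xi>\<bar> < Im (of_real x / d)" using elim q unfolding z by (simp add: field_simps)
    have inv: "u / d = q * u" for u by (simp add: q_def)
    from model_branch_series[OF d0 im, unfolded z, unfolded inv]
    have "branch_series (\<lambda>k. d * (of_nat (Suc k) + \<xi>)) (of_real x) =
        q * (Digamma (of_real x * q + 1 + \<xi>) - Digamma (of_real x * q - \<xi>)
             - of_real pi * cot (of_real pi * (of_real x * q - \<xi>)))" .
    thus ?case unfolding inv by (simp only:) (simp add: algebra_simps)
  qed
  ultimately show ?thesis by (simp add: tendsto_cong)
qed

lemma branch_lower_bound:
  fixes w :: "nat \<Rightarrow> complex" and d \<xi> :: complex and B :: real
  assumes d: "Im d \<noteq> 0" and B: "\<And>m. norm (w m - d * (of_nat m + \<xi>)) \<le> B"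
  obtains m0 X0 where "m0 > 0" "X0 \<ge> 1"
    "\<And>x k y. X0 \<le> x \<Longrightarrow> y \<in> {of_real x, - of_real x} \<Longrightarrow>
        m0 * (real k + x) \<le> norm (d * (of_nat (Suc k) + \<xi>) - y) \<and>
        m0 * (real k + x) \<le> norm (w (Suc k) - y)"
proof -
  define q where "q = 1 / d"
  have d0: "d \<noteq> 0" using d by auto
  have "(Re d)^2 + (Im d)^2 > 0" using d by (simp add: sum_power2_gt_zero_iff)
  hence q: "Im q \<noteq> 0" "Im (- q) \<noteq> 0" unfolding q_def using d by (simp_all add: Im_divide)
  obtain c1 X1 where c1: "c1 > 0" "X1 \<ge> 1" and ray1: "\<And>x c k. X1 \<le> x \<Longrightarrow> norm c \<le> 1 + norm \<xi> \<Longrightarrow>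
      c1 * (real k + x) \<le> norm (of_real x * q + c + of_nat k)"
    using ray_lower_bound[OF q(1), where C = "1 + norm \<xi>"] by blast
  obtain c2 X2 where c2: "c2 > 0" "X2 \<ge> 1" and ray2: "\<And>x c k. X2 \<le> x \<Longrightarrow> norm c \<le> 1 + norm \<xi> \<Longrightarrow>
      c2 * (real k + x) \<le> norm (of_real x * - q + c + of_nat k)"
    using ray_lower_bound[OF q(2), where C = "1 + norm \<xi>"] by blast
  define c0 where "c0 = min c1 c2"
  define m0 where "m0 = norm d * c0 / 2"
  have m0: "m0 > 0" using c1 c2 d0 by (simp add: m0_def c0_def)
  show ?thesis
  proof
    show "m0 > 0" by (fact m0)
    show "max (max X1 X2) (B / m0) \<ge> 1" using c1 by simp
    fix x k and y :: complex
    assume x: "max (max X1 X2) (B / m0) \<le> x" and y: "y \<in> {of_real x, - of_real x}"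
    have kx: "real k + x > 0" using x c1 by simp
    have \<xi>: "norm (1 + \<xi>) \<le> 1 + norm \<xi>" using norm_triangle_ineq[of 1 \<xi>] by simp
    have "c0 * (real k + x) \<le> c1 * (real k + x)" "c0 * (real k + x) \<le> c2 * (real k + x)"
      using kx by (simp_all add: c0_def mult_right_mono)
    hence ray: "c0 * (real k + x) \<le> norm (of_real x * \<sigma> + (1 + \<xi>) + of_nat k)" if "\<sigma> \<in> {q, - q}" for \<sigma>
      using that ray1[OF _ \<xi>, of x k] ray2[OF _ \<xi>, of x k] x by auto
    have x_eq: "of_real x = d * (of_real x * q)" using d0 by (simp add: q_def)
    obtain \<sigma> where "\<sigma> \<in> {q, - q}"
      and \<sigma>: "d * (of_nat (Suc k) + \<xi>) - y = d * (of_real x * \<sigma> + (1 + \<xi>) + of_nat k)"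
    proof (cases "y = of_real x")
      case True
      show ?thesis by (rule that[of "- q"]) (simp, subst True, subst x_eq, simp add: algebra_simps)
    next
      case False
      hence "y = - of_real x" using y by simp
      show ?thesis by (rule that[of q]) (simp, subst \<open>y = - of_real x\<close>, subst x_eq, simp add: algebra_simps)
    qed
    have "norm d * (c0 * (real k + x)) \<le> norm d * norm (of_real x * \<sigma> + (1 + \<xi>) + of_nat k)"
      using ray[OF \<open>\<sigma> \<in> {q, - q}\<close>] by (rule mult_left_mono) simp
    moreover have "2 * (m0 * (real k + x)) = norm d * (c0 * (real k + x))" by (simp add: m0_def)
    ultimately have model: "2 * (m0 * (real k + x)) \<le> norm (d * (of_nat (Suc k) + \<xi>) - y)"
      unfolding \<sigma> norm_mult by linarith
    have "d * (of_nat (Suc k) + \<xi>) - y = (w (Suc k) - y) - (w (Suc k) - d * (of_nat (Suc k) + \<xi>))"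
      by simp
    hence "norm (d * (of_nat (Suc k) + \<xi>) - y)
        \<le> norm (w (Suc k) - y) + norm (w (Suc k) - d * (of_nat (Suc k) + \<xi>))"
      by (metis norm_triangle_ineq4)
    hence "norm (d * (of_nat (Suc k) + \<xi>) - y) \<le> norm (w (Suc k) - y) + B"
      using B[of "Suc k"] by linarith
    moreover have "B \<le> m0 * x" using x m0 by (simp add: field_simps)
    moreover have "m0 * x \<le> m0 * (real k + x)" using m0 by simp
    moreover have "0 \<le> m0 * (real k + x)" using m0 kx by simp
    ultimately show "m0 * (real k + x) \<le> norm (d * (of_nat (Suc k) + \<xi>) - y) \<and>
        m0 * (real k + x) \<le> norm (w (Suc k) - y)"
      using model by linarith
  qed
qed

lemma summable_branch_terms:
  fixes a :: "nat \<Rightarrow> complex" and m x :: real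
  assumes m: "m > 0" and x: "x \<ge> 1"
    and minus: "\<And>k. m * (real k + x) \<le> norm (a k - of_real x)"
    and plus: "\<And>k. m * (real k + x) \<le> norm (a k + of_real x)"
  shows "summable (\<lambda>k. 1 / (a k - of_real x) - 1 / (a k + of_real x))"
proof (rule summable_norm_le_inverse_square(1)[OF x])
  fix k
  have pos: "m * (real k + x) > 0" using m x by simp
  have "norm (1 / (a k - of_real x) - 1 / (a k + of_real x)) \<le> norm (2 * of_real x :: complex) / (m * (real k + x))^2"
    using norm_inverse_diff_le[OF pos minus plus] by simp
  also have "\<dots> = 2 * x / m^2 / (real k + x)^2"
    using x by (simp add: norm_mult power_mult_distrib)
  finally show "norm (1 / (a k - of_real x) - 1 / (a k + of_real x)) \<le> 2 * x / m^2 / (real k + x)^2" .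
qed

lemma branch_perturbation:
  fixes w :: "nat \<Rightarrow> complex" and d \<xi> :: complex
  assumes d: "Im d \<noteq> 0" and e: "(\<lambda>m. w m - d * (of_nat m + \<xi>)) \<longlonglongrightarrow> 0"
  shows "((\<lambda>x::real. of_real x * (branch_series (\<lambda>k. w (Suc k)) (of_real x)
            - branch_series (\<lambda>k. d * (of_nat (Suc k) + \<xi>)) (of_real x))) \<longlongrightarrow> 0) at_top"
proof -
  define v where "v k = d * (of_nat (Suc k) + \<xi>)" for k
  obtain B where B: "\<And>m. norm (w m - d * (of_nat m + \<xi>)) \<le> B"
    using convergent_imp_Bseq[OF convergentI[OF e]] by (auto simp: Bseq_def)
  obtain m0 X0 where m0: "m0 > 0" "X0 \<ge> 1" and bound: "\<And>x k y. X0 \<le> x \<Longrightarrow> y \<in> {of_real x, - of_real x} \<Longrightarrow>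
      m0 * (real k + x) \<le> norm (d * (of_nat (Suc k) + \<xi>) - y) \<and> m0 * (real k + x) \<le> norm (w (Suc k) - y)"
    using branch_lower_bound[OF d B] by blast
  define D where "D x k = (1 / (w (Suc k) - of_real x) - 1 / (w (Suc k) + of_real x))
                          - (1 / (v k - of_real x) - 1 / (v k + of_real x))" for x :: real and k
  have D_bound: "norm (D x k) \<le> 2 * norm (w (Suc k) - v k) / m0^2 / (real k + x)^2"
    if x: "X0 \<le> x" for x k
  proof -
    have pos: "m0 * (real k + x) > 0" using m0 x by simp
    have diff: "norm (1 / (w (Suc k) - y) - 1 / (v k - y)) \<le> norm (w (Suc k) - v k) / (m0 * (real k + x))^2"
      if "y \<in> {of_real x, - of_real x}" for y
      using norm_inverse_diff_le[OF pos, of "w (Suc k) - y" "v k - y"] bound[OF x that, of k]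
      by (simp add: v_def norm_minus_commute)
    have "D x k = (1 / (w (Suc k) - of_real x) - 1 / (v k - of_real x))
        - (1 / (w (Suc k) - - of_real x) - 1 / (v k - - of_real x))"
      unfolding D_def by (simp add: algebra_simps)
    hence "norm (D x k) \<le> norm (1 / (w (Suc k) - of_real x) - 1 / (v k - of_real x))
        + norm (1 / (w (Suc k) - - of_real x) - 1 / (v k - - of_real x))"
      by (metis norm_triangle_ineq4)
    also have "\<dots> \<le> 2 * (norm (w (Suc k) - v k) / (m0 * (real k + x))^2)"
      using diff[of "of_real x"] diff[of "- of_real x"] by simp
    finally show ?thesis by (simp add: power_mult_distrib)
  qed
  have "(\<lambda>k. 2 * norm (w (Suc k) - v k) / m0^2) \<longlonglongrightarrow> 0"
    unfolding v_def by (intro tendsto_divide_zero tendsto_mult_right_zero tendsto_norm_zero LIMSEQ_Suc[OF e])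
  hence "((\<lambda>x. of_real x * (\<Sum>k. D x k)) \<longlongrightarrow> 0) at_top"
    using D_bound by (rule tendsto_of_real_mult_suminf_zero)
  moreover have "eventually (\<lambda>x. of_real x * (\<Sum>k. D x k) = of_real x * (branch_series (\<lambda>k. w (Suc k)) (of_real x)
            - branch_series (\<lambda>k. d * (of_nat (Suc k) + \<xi>)) (of_real x))) at_top"
    using eventually_ge_at_top[of X0]
  proof eventually_elim
    case (elim x)
    have "summable (\<lambda>k. 1 / (a k - of_real x) - 1 / (a k + of_real x))"
      if "a = (\<lambda>k. w (Suc k)) \<or> a = v" for a
      using m0 elim that bound[OF elim, of "of_real x"] bound[OF elim, of "- of_real x"]
      by (intro summable_branch_terms[OF m0(1)]) (auto simp: v_def)
    thus ?case unfolding D_def branch_series_def v_def[symmetric]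
      by (subst suminf_diff) auto
  qed
  ultimately show ?thesis by (simp add: tendsto_cong)
qed

lemma branch_series_asymp:
  fixes w :: "nat \<Rightarrow> complex" and d \<xi> :: complex
  assumes d: "Im d < 0" and e: "(\<lambda>m. w m - d * (of_nat m + \<xi>)) \<longlonglongrightarrow> 0"
  shows "((\<lambda>x::real. of_real x * (branch_series (\<lambda>k. w (Suc k)) (of_real x) - \<i> * of_real pi / d))
           \<longlongrightarrow> 1 + 2 * \<xi>) at_top"
  using tendsto_add[OF branch_perturbation[OF _ e] model_branch_asymp[OF d, of \<xi>]] d
  by (simp add: algebra_simps)

section \<open>The logarithmic derivative of rho\<close>

lemma summable_inverse_norm_square_branch:
  fixes w :: "nat \<Rightarrow> complex" and d \<xi> :: complex
  assumes d: "d \<noteq> 0" and e: "(\<lambda>m. w m - d * (of_nat m + \<xi>)) \<longlonglongrightarrow> 0"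
  shows "summable (\<lambda>k. 1 / norm (w (Suc k))^2)"
proof -
  have "(\<lambda>n. d + (d * \<xi> + (w n - d * (of_nat n + \<xi>))) / of_nat n) \<longlonglongrightarrow> d + 0"
    using e by (intro tendsto_add tendsto_const tendsto_divide_0[OF _ tendsto_of_nat])
      (auto intro: tendsto_eq_intros)
  moreover have "eventually (\<lambda>n. d + (d * \<xi> + (w n - d * (of_nat n + \<xi>))) / of_nat n = w n / of_nat n) sequentially"
    using eventually_gt_at_top[of "0::nat"] by eventually_elim (simp add: field_simps)
  ultimately have "(\<lambda>n. w n / of_nat n) \<longlonglongrightarrow> d" by (simp add: tendsto_cong)
  hence "(\<lambda>k. 1 / norm (w (Suc k) / of_nat (Suc k))^2) \<longlonglongrightarrow> 1 / norm d ^ 2"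
    using d by (intro tendsto_intros LIMSEQ_Suc) auto
  moreover have "1 / norm (w (Suc k) / of_nat (Suc k))^2 = (1 / norm (w (Suc k))^2) / (1 / (real k + 1)^2)" for k
  proof -
    have "norm (1 + of_nat k :: complex) = 1 + real k"
      using norm_of_nat[of "Suc k", where 'a = complex] by simp
    thus ?thesis by (simp add: norm_divide power_divide)
  qed
  ultimately have "(\<lambda>k. 1 / norm (w (Suc k))^2) \<in> O(\<lambda>k. 1 / (real k + 1)^2)"
    by (intro bigoI_tendsto[where c = "1 / norm d ^ 2"]) auto
  thus ?thesis
    by (rule summable_comparison_test_bigo[rotated]) (simp add: inverse_square_shift_summable(1))
qed

lemma convergent_prod_branch_factors:
  fixes a :: "nat \<Rightarrow> complex"
  assumes summable: "summable (\<lambda>k. 1 / norm (a k)^2)"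
  shows "convergent_prod (\<lambda>k. 1 - (z / a k)^2)"
proof -
  have "summable (\<lambda>k. norm ((1 - (z / a k)^2) - 1))"
    by (rule summable_comparison_test[OF _ summable_mult[OF summable, of "norm z ^ 2"]])
       (auto simp: norm_divide norm_power power_divide)
  thus ?thesis by (intro abs_convergent_prod_imp_convergent_prod summable_imp_abs_convergent_prod)
qed

lemma uniform_limit_branch_product:
  fixes a :: "nat \<Rightarrow> complex" and z0 :: complex and r :: real
  assumes summable: "summable (\<lambda>k. 1 / norm (a k)^2)" and nz: "\<And>k. a k \<noteq> 0"
  shows "uniform_limit (cball z0 r) (\<lambda>N z. \<Prod>k<N. 1 - (z / a k)^2) (\<lambda>z. \<Prod>k. 1 - (z / a k)^2) sequentially"
proof -
  define B where "B = (norm z0 + r)^2"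
  have bound: "norm ((1 - (z / a k)^2) - 1) \<le> B * (1 / norm (a k)^2)" if "z \<in> cball z0 r" for k z
  proof -
    have "norm z \<le> norm z0 + r" using that norm_triangle_sub[of z z0] by (simp add: dist_norm norm_minus_commute)
    hence "norm z ^ 2 \<le> B" unfolding B_def by (intro power_mono) auto
    thus ?thesis by (simp add: norm_divide norm_power power_divide divide_right_mono)
  qed
  have "uniformly_convergent_on (cball z0 r) (\<lambda>N z. \<Prod>k<N. 1 - (z / a k)^2)"
  proof (rule uniformly_convergent_on_prod')
    show "uniformly_convergent_on (cball z0 r) (\<lambda>N z. \<Sum>k<N. norm ((1 - (z / a k)^2) - 1))"
      by (rule Weierstrass_m_test'[where M = "\<lambda>k. B * (1 / norm (a k)^2)"])
         (use bound summable_mult[OF summable, of B] in auto)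
  qed (auto intro!: continuous_intros nz)
  then obtain g where g: "uniform_limit (cball z0 r) (\<lambda>N z. \<Prod>k<N. 1 - (z / a k)^2) g sequentially"
    unfolding uniformly_convergent_on_def by blast
  have "g z = (\<Prod>k. 1 - (z / a k)^2)" if "z \<in> cball z0 r" for z
  proof -
    have "(\<lambda>N. \<Prod>k<Suc N. 1 - (z / a k)^2) \<longlonglongrightarrow> (\<Prod>k. 1 - (z / a k)^2)"
      using convergent_prod_LIMSEQ[OF convergent_prod_branch_factors[OF summable]]
      unfolding lessThan_Suc_atMost .
    hence "(\<lambda>N. \<Prod>k<N. 1 - (z / a k)^2) \<longlonglongrightarrow> (\<Prod>k. 1 - (z / a k)^2)" by (rule LIMSEQ_imp_Suc)
    thus ?thesis using tendsto_uniform_limitI[OF g that] LIMSEQ_unique by blast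
  qed
  with g show ?thesis by (subst (asm) uniform_limit_cong'[OF refl]) auto
qed

lemma has_field_derivative_branch_product:
  fixes a :: "nat \<Rightarrow> complex" and z0 :: complex
  assumes summable: "summable (\<lambda>k. 1 / norm (a k)^2)" and nz: "\<And>k. a k \<noteq> 0"
    and z0: "\<And>k. z0^2 \<noteq> (a k)^2"
  defines "P \<equiv> \<lambda>z. \<Prod>k. 1 - (z / a k)^2"
  shows "P z0 \<noteq> 0" "(P has_field_derivative - P z0 * branch_series a z0) (at z0)"
proof -
  have factor: "1 - (z0 / a k)^2 \<noteq> 0" for k
    using z0[of k] nz[of k] by (simp add: power_divide field_simps)
  show P0: "P z0 \<noteq> 0"
    unfolding P_def using prodinf_nonzero[OF convergent_prod_branch_factors[OF summable]] factor by auto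
  have uniform: "uniform_limit (cball z0 1) (\<lambda>N z. \<Prod>k<N. 1 - (z / a k)^2) P sequentially"
    unfolding P_def by (rule uniform_limit_branch_product[OF summable nz])
  have holo: "P holomorphic_on ball z0 1"
    by (rule holomorphic_uniform_limit[OF _ uniform])
       (auto intro!: always_eventually continuous_intros holomorphic_intros nz)
  have "(\<lambda>k. deriv (\<lambda>z. 1 - (z / a k)^2) z0 / (1 - (z0 / a k)^2)) sums (deriv P z0 / P z0)"
    by (rule logderiv_prodinf_complex_uniform_limit[OF uniform_limit_on_subset[OF uniform ball_subset_cball]])
       (auto simp: P0 intro!: holomorphic_intros nz)
  moreover have "deriv (\<lambda>z. 1 - (z / a k)^2) z0 / (1 - (z0 / a k)^2) = - (1 / (a k - z0) - 1 / (a k + z0))" for k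
  proof -
    have "a k - z0 \<noteq> 0" "a k + z0 \<noteq> 0"
      using z0[of k] by (auto simp: add_eq_0_iff2)
    moreover have "deriv (\<lambda>z. 1 - (z / a k)^2) z0 = - (2 * z0 / (a k)^2)"
      by (rule DERIV_imp_deriv) (auto intro!: derivative_eq_intros simp: power2_eq_square field_simps nz)
    ultimately show ?thesis using nz[of k] by (simp add: field_simps power2_eq_square)
  qed
  ultimately have "(\<lambda>k. - (1 / (a k - z0) - 1 / (a k + z0))) sums (deriv P z0 / P z0)"
    by (simp only:)
  from sums_minus[OF this] have "deriv P z0 / P z0 = - branch_series a z0"
    unfolding branch_series_def by (simp add: sums_iff)
  hence "deriv P z0 = - P z0 * branch_series a z0" using P0 by (simp add: field_simps)
  moreover have "(P has_field_derivative deriv P z0) (at z0)"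
    by (rule holomorphic_derivI[OF holo]) auto
  ultimately show "(P has_field_derivative - P z0 * branch_series a z0) (at z0)" by simp
qed

lemma sinh_complex_of_real: "sinh (complex_of_real y) = of_real (sinh y)"
  by (simp add: sinh_field_def exp_of_real flip: of_real_minus)

lemma cosh_complex_of_real: "cosh (complex_of_real y) = of_real (cosh y)"
  by (simp add: cosh_field_def exp_of_real flip: of_real_minus)

lemma rho_fun_logderiv:
  fixes w :: "nat \<Rightarrow> nat \<Rightarrow> complex" and \<mu> :: complex and \<beta> x :: real
  assumes summable: "\<And>j. j < M \<Longrightarrow> summable (\<lambda>k. 1 / norm (w (Suc k) j)^2)"
    and nonreal: "\<And>k j. j < M \<Longrightarrow> Im (w (Suc k) j) \<noteq> 0"
    and x: "x > 0" and \<beta>: "\<beta> > 0" and \<mu>: "\<mu> \<noteq> 0"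
  shows "deriv (rho_fun \<mu> \<beta> w M) (of_real x) / rho_fun \<mu> \<beta> w M (of_real x)
       = of_real (\<beta> / 2 * (cosh (\<beta> * x / 2) / sinh (\<beta> * x / 2)))
         + (\<Sum>j<M. branch_series (\<lambda>k. w (Suc k) j) (of_real x))"
proof -
  define z0 where "z0 = complex_of_real x"
  define P where "P j z = (\<Prod>k. 1 - (z / w (Suc k) j)^2)" for j z
  define S where "S j = branch_series (\<lambda>k. w (Suc k) j) z0" for j
  have factor: "P j z0 \<noteq> 0" "(P j has_field_derivative - P j z0 * S j) (at z0)" if j: "j < M" for j
  proof -
    have "w (Suc k) j \<noteq> 0" "z0^2 \<noteq> (w (Suc k) j)^2" for k
      using nonreal[OF j, of k] by (auto simp: z0_def power2_eq_iff dest: arg_cong[where f = Im])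
    thus "P j z0 \<noteq> 0" "(P j has_field_derivative - P j z0 * S j) (at z0)"
      unfolding P_def S_def using has_field_derivative_branch_product[OF summable[OF j]] by auto
  qed
  have "branch_prod w M = (\<lambda>z. \<Prod>j\<in>{..<M}. P j z)"
    by (simp add: branch_prod_def P_def fun_eq_iff)
  hence Q: "(branch_prod w M has_field_derivative branch_prod w M z0 * (\<Sum>j<M. - S j)) (at z0)"
    using has_field_derivative_prod'[of "{..<M}" P z0 "\<lambda>j. - P j z0 * S j"] factor by simp
  have Q0: "branch_prod w M z0 \<noteq> 0"
    using factor(1) by (simp add: branch_prod_def P_def[symmetric])
  have sinh0: "sinh (of_real \<beta> * z0 / 2) \<noteq> 0"
    using x \<beta> sinh_complex_of_real[of "\<beta> * x / 2"] by (simp add: z0_def)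
  have "((\<lambda>z. \<mu> * sinh (of_real \<beta> * z / 2)) has_field_derivative
          \<mu> * (cosh (of_real \<beta> * z0 / 2) * (of_real \<beta> / 2))) (at z0)"
    by (auto intro!: derivative_eq_intros)
  from DERIV_divide[OF this Q Q0]
  have deriv: "deriv (rho_fun \<mu> \<beta> w M) z0 =
      (\<mu> * (cosh (of_real \<beta> * z0 / 2) * (of_real \<beta> / 2)) * branch_prod w M z0
        - \<mu> * sinh (of_real \<beta> * z0 / 2) * (branch_prod w M z0 * (\<Sum>j<M. - S j)))
      / (branch_prod w M z0 * branch_prod w M z0)"
    unfolding rho_fun_def[abs_def] by (rule DERIV_imp_deriv)
  have quotient: "((\<mu> * (c * (b / 2)) * Q - \<mu> * s * (Q * T)) / (Q * Q)) / (\<mu> * s / Q) = b / 2 * (c / s) - T"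
    if "Q \<noteq> 0" "s \<noteq> 0" for Q s c b T :: complex
    using that \<mu> by (simp add: field_simps)
  have logderiv: "deriv (rho_fun \<mu> \<beta> w M) z0 / rho_fun \<mu> \<beta> w M z0
      = of_real \<beta> / 2 * (cosh (of_real \<beta> * z0 / 2) / sinh (of_real \<beta> * z0 / 2)) - (\<Sum>j<M. - S j)"
    unfolding deriv rho_fun_def by (rule quotient[OF Q0 sinh0])
  have "of_real \<beta> * z0 / 2 = of_real (\<beta> * x / 2)" by (simp add: z0_def)
  from logderiv[unfolded this sinh_complex_of_real cosh_complex_of_real sum_negf] show ?thesis
    by (simp add: z0_def S_def)
qed

lemma rho_fun_logderiv_asymp:
  fixes w :: "nat \<Rightarrow> nat \<Rightarrow> complex" and d \<xi> :: "nat \<Rightarrow> complex" and \<mu> :: complex and \<beta> :: real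
  assumes nonreal: "\<And>k j. j < M \<Longrightarrow> Im (w (Suc k) j) \<noteq> 0"
    and d: "\<And>j. j < M \<Longrightarrow> Im (d j) < 0"
    and e: "\<And>j. j < M \<Longrightarrow> (\<lambda>m. w m j - d j * (of_nat m + \<xi> j)) \<longlonglongrightarrow> 0"
    and \<beta>: "\<beta> > 0" and \<mu>: "\<mu> \<noteq> 0"
  shows "((\<lambda>x::real. of_real x * (deriv (rho_fun \<mu> \<beta> w M) (of_real x) / rho_fun \<mu> \<beta> w M (of_real x)
            - (of_real \<beta> / 2 + (\<Sum>j<M. \<i> * of_real pi / d j)))) \<longlongrightarrow> (\<Sum>j<M. 1 + 2 * \<xi> j)) at_top"
proof -
  have summable: "summable (\<lambda>k. 1 / norm (w (Suc k) j)^2)" if "j < M" for j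
    using d[OF that] by (intro summable_inverse_norm_square_branch[OF _ e[OF that]]) auto
  have "((\<lambda>x. x * (cosh (\<beta> * x / 2) / sinh (\<beta> * x / 2) - 1)) \<longlongrightarrow> 0) at_top"
    using \<beta> by real_asymp
  hence "((\<lambda>x. of_real \<beta> / 2 * of_real (x * (cosh (\<beta> * x / 2) / sinh (\<beta> * x / 2) - 1))
          + (\<Sum>j<M. of_real x * (branch_series (\<lambda>k. w (Suc k) j) (of_real x) - \<i> * of_real pi / d j)))
        \<longlongrightarrow> of_real \<beta> / 2 * of_real 0 + (\<Sum>j<M. 1 + 2 * \<xi> j)) at_top"
    by (intro tendsto_intros branch_series_asymp d e) auto
  moreover have "eventually (\<lambda>x.
      of_real \<beta> / 2 * of_real (x * (cosh (\<beta> * x / 2) / sinh (\<beta> * x / 2) - 1))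
        + (\<Sum>j<M. of_real x * (branch_series (\<lambda>k. w (Suc k) j) (of_real x) - \<i> * of_real pi / d j))
      = of_real x * (deriv (rho_fun \<mu> \<beta> w M) (of_real x) / rho_fun \<mu> \<beta> w M (of_real x)
            - (of_real \<beta> / 2 + (\<Sum>j<M. \<i> * of_real pi / d j)))) at_top"
    using eventually_gt_at_top[of 0]
  proof eventually_elim
    case (elim x)
    have logderiv: "deriv (rho_fun \<mu> \<beta> w M) (of_real x) / rho_fun \<mu> \<beta> w M (of_real x)
       = of_real (\<beta> / 2 * (cosh (\<beta> * x / 2) / sinh (\<beta> * x / 2)))
         + (\<Sum>j<M. branch_series (\<lambda>k. w (Suc k) j) (of_real x))"
      by (rule rho_fun_logderiv[OF summable nonreal elim \<beta> \<mu>])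
    show ?case
      unfolding logderiv by (simp add: algebra_simps sum_subtractf sum_distrib_left)
  qed
  ultimately show ?thesis by (simp add: tendsto_cong)
qed

theorem mainTheorem9:
  fixes w :: "nat \<Rightarrow> nat \<Rightarrow> complex" and d \<xi> :: "nat \<Rightarrow> complex"
    and M :: nat and \<epsilon> \<beta> s :: real and \<mu> :: complex
  assumes M: "M \<ge> 1"
    and nonzero: "\<And>m j. m \<ge> 1 \<Longrightarrow> j < M \<Longrightarrow> w m j \<noteq> 0"
    and nonreal: "\<And>m j. m \<ge> 1 \<Longrightarrow> j < M \<Longrightarrow> Im (w m j) \<noteq> 0"
    and disjoint: "inj_on (\<lambda>(m, j). w m j) ({1..} \<times> {..<M})"
    and eps: "\<epsilon> > 0"
    and asym: "\<And>j. j < M \<Longrightarrow>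
        (\<lambda>m. norm (w m j - d j * (of_nat m + \<xi> j))) \<in> O[at_top](\<lambda>m. real m powr (- \<epsilon>))"
    and d_im: "\<And>j. j < M \<Longrightarrow> Im (d j) < 0"
    and beta: "\<beta> > 0"
    and mu: "\<mu> \<noteq> 0"
    and logderiv: "(\<lambda>x::real. deriv (rho_fun \<mu> \<beta> w M) (of_real x) / rho_fun \<mu> \<beta> w M (of_real x)
                       - of_real s / of_real x) \<in> o[at_top](\<lambda>x. 1 / complex_of_real x)"
  shows "- \<i> * (\<Sum>j<M. 1 / d j) = of_real (\<beta> / (2 * pi)) \<and>
         (\<Sum>j<M. 1 + 2 * \<xi> j) = of_real s"
proof -
  have branches: "(\<lambda>m. w m j - d j * (of_nat m + \<xi> j)) \<longlonglongrightarrow> 0" if "j < M" for j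
    using bigo_powr_neg_tendsto_zero[OF eps asym[OF that]] by (simp only: tendsto_norm_zero_iff)
  have "Im (w (Suc k) j) \<noteq> 0" if "j < M" for k j using nonreal that by simp
  from linear_asymp_unique[OF smallo_inverse_imp_tendsto[OF logderiv]
         rho_fun_logderiv_asymp[where M = M and w = w, OF this d_im branches beta mu]]
  have "of_real \<beta> / 2 + (\<Sum>j<M. \<i> * of_real pi / d j) = 0" "(\<Sum>j<M. 1 + 2 * \<xi> j) = of_real s"
    by auto
  moreover have "(\<Sum>j<M. \<i> * of_real pi / d j) = \<i> * of_real pi * (\<Sum>j<M. 1 / d j)"
    by (simp add: sum_distrib_left)
  ultimately show ?thesis by (simp add: field_simps) algebra
qed

end
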